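(* Let $\mathcal T\subset\mathbb R^2$ be a nonempty closed target set, $\phi(\mathbf{x})=\min_{\mathbf{z}\in\mathcal T}\|\mathbf{x}-\mathbf{z}\|$, and fix initial positions with $\mathbf{x}_E(t_0)\ne\mathbf{x}_P(t_0)$ and $\mathbf{x}_E(t_0)\notin\mathcal T$. Assume there is $\nu<1$ with $\min_{\mathbf{x}\in\mathcal A(t_0;\nu)}\phi(\mathbf{x})=0$, and let $\nu_{\rm crit}<1$ be the smallest such $\nu$. Then, in the Generalized Target Guarding game with evader maximum speed $\nu_{\rm true}$ and pursuer maximum speed $1$, there exists a pursuer strategy that wins against every admissible evader control if and only if $\nu_{\rm true}<\nu_{\rm crit}$.
   Context: Setting: planar simple motion, $\dot{\mathbf{x}}_E=\mathbf{v}_E$ with $\|\mathbf{v}_E\|\le\nu_{\rm true}$, $\dot{\mathbf{x}}_P=\mathbf{v}_P$ with $\|\mathbf{v}_P\|\le1$; the game starts at $t_0$; capture is the first time $\mathbf{x}_P=\mathbf{x}_E$. For $\nu\in[0,1)$, $\mathcal A(t_0;\nu)$ is the closed disc with center $\frac{1}{1-\nu^2}\mathbf{x}_E(t_0)-\frac{\nu^2}{1-\nu^2}\mathbf{x}_P(t_0)$ and radius $\frac{\nu}{1-\nu^2}\|\mathbf{x}_E(t_0)-\mathbf{x}_P(t_0)\|$. Generalized Target Guarding: the evader wins if it reaches a point of $\mathcal T$ at a time no later than capture (ties go to the evader); the pursuer wins if capture occurs strictly before the evader reaches $\mathcal T$. The target set is not an obstacle. *)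

theory Defs
  imports "HOL-Analysis.Analysis"
begin

type_synonym pt = "real^2"

definition apollonius :: "pt \<Rightarrow> pt \<Rightarrow> real \<Rightarrow> pt set" where
  "apollonius xE xP \<nu> =
     cball ((1 / (1 - \<nu>\<^sup>2)) *\<^sub>R xE - (\<nu>\<^sup>2 / (1 - \<nu>\<^sup>2)) *\<^sub>R xP)
           (\<nu> / (1 - \<nu>\<^sup>2) * dist xE xP)"

text \<open>phi(x) = distance from x to the target set T (a minimum for closed nonempty T).\<close>
definition phi :: "pt set \<Rightarrow> pt \<Rightarrow> real" where
  "phi T x = infdist x T"

definition crit_set :: "pt set \<Rightarrow> pt \<Rightarrow> pt \<Rightarrow> real set" where
  "crit_set T xE xP = {\<nu>. 0 \<le> \<nu> \<and> \<nu> < 1 \<and> (INF x\<in>apollonius xE xP \<nu>. phi T x) = 0}"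

text \<open>Trajectories generated by admissible controls from time t0 on: absolutely continuous
  paths with speed bounded by c, i.e. c-Lipschitz paths on [t0,\<infinity>), starting at x0.\<close>
definition admissible :: "real \<Rightarrow> real \<Rightarrow> pt \<Rightarrow> (real \<Rightarrow> pt) \<Rightarrow> bool" where
  "admissible c t0 x0 x \<longleftrightarrow> x t0 = x0 \<and> c-lipschitz_on {t0..} x"

text \<open>Pursuer wins the play: capture happens at some time tc strictly before the evader
  reaches T (the evader has not been in T at any time in [t0,tc]; ties go to the evader).\<close>
definition pursuer_wins_play :: "pt set \<Rightarrow> real \<Rightarrow> (real \<Rightarrow> pt) \<Rightarrow> (real \<Rightarrow> pt) \<Rightarrow> bool" where
  "pursuer_wins_play T t0 xE xP \<longleftrightarrow>
     (\<exists>tc\<ge>t0. xP tc = xE tc \<and> (\<forall>s\<in>{t0..tc}. xE s \<notin> T))"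

definition pursuer_strategy ::
  "real \<Rightarrow> real \<Rightarrow> pt \<Rightarrow> pt \<Rightarrow> ((real \<Rightarrow> pt) \<Rightarrow> (real \<Rightarrow> pt)) \<Rightarrow> bool" where
  "pursuer_strategy \<nu> t0 xE0 xP0 \<beta> \<longleftrightarrow>
     (\<forall>e. admissible \<nu> t0 xE0 e \<longrightarrow> admissible 1 t0 xP0 (\<beta> e)) \<and>
     (\<forall>e1 e2 t. admissible \<nu> t0 xE0 e1 \<longrightarrow> admissible \<nu> t0 xE0 e2 \<longrightarrow> t0 \<le> t \<longrightarrow>
        (\<forall>s\<in>{t0..t}. e1 s = e2 s) \<longrightarrow> (\<forall>s\<in>{t0..t}. \<beta> e1 s = \<beta> e2 s))"

end

theory Submission
  imports Defs
begin

(* Write D(mu) for the disc of points x with |x - xE0| <= mu |x - xP0|: for 0 <= mu < 1 it is the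
   Apollonius disc A(t0; mu), the set of points that an evader of speed mu reaches no later than a
   unit-speed pursuer. By compactness, nu_crit is the least mu for which D(mu) meets T.

   If nu_true >= nu_crit, the evader runs straight at speed nu_crit to a target point w in
   D(nu_crit). The open segment from xE0 to w lies in the interior of D(nu_crit), so a pursuer within
   distance t - t0 of xP0 at time t can never be where the evader is.

   If nu_true < nu_crit, pick nu_true < mu < nu_crit, so that D(mu) misses T. Let v = xP0 - xE0,
   let z be the evader's displacement and u(z) >= 0 the solution of |z| = mu |z - u v|. The pursuer
   stays at the evader's position plus lambda(t) max(0, 1 - u(z)) v, where lambda decreases
   linearly from 1 to 0 at rate c = (1 - nu_true / mu) / |v|. Since z - u(z) v is a
   (1/mu)-Lipschitz function of z, this motion has speed at most nu_true / mu + c |v| = 1. Capture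
   happens once u(z) reaches 1, i.e. when the evader is about to leave D(mu), or at the latest when
   lambda vanishes; until then the evader stays in D(mu) and hence outside T. *)

lemma mem_apollonius_iff:
  assumes "0 \<le> \<mu>" "\<mu> < 1"
  shows "x \<in> apollonius xE xP \<mu> \<longleftrightarrow> norm (x - xE) \<le> \<mu> * norm (x - xP)"
proof -
  define b where "b = 1 - \<mu>\<^sup>2"
  have b: "b > 0" using assms by (simp add: b_def power_less_one_iff)
  define C where "C = (1 / b) *\<^sub>R xE - (\<mu>\<^sup>2 / b) *\<^sub>R xP"
  define A where "A = x - xE"
  define B where "B = x - xP"
  have "b *\<^sub>R (x - C) = b *\<^sub>R x - xE + \<mu>\<^sup>2 *\<^sub>R xP"
    using b by (simp add: C_def scaleR_diff_right)
  also have "\<dots> = A - \<mu>\<^sup>2 *\<^sub>R B" by (simp add: A_def B_def b_def algebra_simps)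
  finally have centre: "b *\<^sub>R (x - C) = A - \<mu>\<^sup>2 *\<^sub>R B" .
  have squares: "(norm (A - \<mu>\<^sup>2 *\<^sub>R B))\<^sup>2 - (\<mu> * norm (A - B))\<^sup>2 =
                   b * ((norm A)\<^sup>2 - (\<mu> * norm B)\<^sup>2)"
    unfolding power2_norm_eq_inner power_mult_distrib b_def
    by (simp add: inner_diff_left inner_diff_right inner_commute power2_eq_square algebra_simps)
  have "x \<in> apollonius xE xP \<mu> \<longleftrightarrow> b * dist C x \<le> \<mu> * dist xE xP"
    using b by (simp add: apollonius_def C_def b_def pos_le_divide_eq mult.commute)
  also have "b * dist C x = norm (A - \<mu>\<^sup>2 *\<^sub>R B)"
    using b by (simp add: centre[symmetric] dist_norm norm_minus_commute)
  also have "dist xE xP = norm (A - B)"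
    by (simp add: A_def B_def dist_norm norm_minus_commute)
  also have "norm (A - \<mu>\<^sup>2 *\<^sub>R B) \<le> \<mu> * norm (A - B) \<longleftrightarrow>
             (norm (A - \<mu>\<^sup>2 *\<^sub>R B))\<^sup>2 \<le> (\<mu> * norm (A - B))\<^sup>2"
    using assms by (intro power_mono_iff[symmetric]) auto
  also have "\<dots> \<longleftrightarrow> b * ((norm A)\<^sup>2 - (\<mu> * norm B)\<^sup>2) \<le> 0"
    unfolding squares[symmetric] by simp
  also have "\<dots> \<longleftrightarrow> (norm A)\<^sup>2 \<le> (\<mu> * norm B)\<^sup>2"
    using mult_le_cancel_left_pos[OF b, of _ 0] by simp
  also have "\<dots> \<longleftrightarrow> norm A \<le> \<mu> * norm B"
    using assms by (intro power_mono_iff) auto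
  finally show ?thesis unfolding A_def B_def .
qed

lemma mem_crit_set_iff:
  assumes "closed T" "T \<noteq> {}"
  shows "\<nu> \<in> crit_set T xE0 xP0 \<longleftrightarrow>
           0 \<le> \<nu> \<and> \<nu> < 1 \<and> (\<exists>w\<in>T. norm (w - xE0) \<le> \<nu> * norm (w - xP0))"
proof (cases "0 \<le> \<nu> \<and> \<nu> < 1")
  case True
  define A where "A = apollonius xE0 xP0 \<nu>"
  have "compact A" by (simp add: A_def apollonius_def)
  moreover have "xE0 \<in> A" using True by (simp add: A_def mem_apollonius_iff)
  ultimately obtain x where x: "x \<in> A" "\<forall>y\<in>A. phi T x \<le> phi T y"
    using continuous_attains_inf[OF _ _ continuous_on_infdist[OF continuous_on_id]]
    unfolding phi_def by blast
  then have "(INF y\<in>A. phi T y) = phi T x"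
    by (intro cInf_eq_minimum) auto
  also have "phi T x = 0 \<longleftrightarrow> (\<exists>w\<in>A. w \<in> T)"
    using x assms infdist_nonneg[of _ T] in_closure_iff_infdist_zero[OF assms(2)]
    by (metis closure_closed phi_def order_antisym)
  finally show ?thesis
    using True by (auto simp: crit_set_def A_def mem_apollonius_iff)
qed (auto simp: crit_set_def)

(* The nonnegative root u of |v|^2 u^2 - 2 (z \<bullet> v) u - (1/\<mu>^2 - 1) |z|^2 = 0,
   i.e. of |z| = \<mu> |z - u v|. *)
definition apollonius_scale :: "real \<Rightarrow> 'a::real_inner \<Rightarrow> 'a \<Rightarrow> real" where
  "apollonius_scale \<mu> v z =
     (z \<bullet> v + sqrt ((z \<bullet> v)\<^sup>2 + (1 / \<mu>\<^sup>2 - 1) * (v \<bullet> v) * (z \<bullet> z))) / (v \<bullet> v)"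

lemma inverse_square_minus_one_nonneg:
  fixes \<mu> :: real
  assumes "0 < \<mu>" "\<mu> \<le> 1"
  shows "0 \<le> 1 / \<mu>\<^sup>2 - 1"
  using assms by (simp add: power_le_one field_simps)

lemma apollonius_scale_zero: "apollonius_scale \<mu> v 0 = 0"
  by (simp add: apollonius_scale_def)

lemma continuous_on_apollonius_scale: "continuous_on S (apollonius_scale \<mu> v)"
  unfolding apollonius_scale_def[abs_def] divide_inverse by (intro continuous_intros)

lemma apollonius_scale_eq_norm:
  fixes v z :: "'a::real_inner"
  assumes "0 < \<mu>" "\<mu> \<le> 1"
  shows "apollonius_scale \<mu> v z =
           (z \<bullet> v + norm (z \<bullet> v, sqrt ((1 / \<mu>\<^sup>2 - 1) * (v \<bullet> v)) *\<^sub>R z)) / (v \<bullet> v)"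
proof -
  have "0 \<le> (1 / \<mu>\<^sup>2 - 1) * (v \<bullet> v)"
    using inverse_square_minus_one_nonneg[OF assms] by simp
  then show ?thesis
    by (simp add: apollonius_scale_def norm_Pair power_mult_distrib power2_norm_eq_inner mult.assoc)
qed

lemma apollonius_scale_nonneg:
  fixes v z :: "'a::real_inner"
  assumes "0 < \<mu>" "\<mu> \<le> 1"
  shows "0 \<le> apollonius_scale \<mu> v z"
proof -
  have "0 \<le> z \<bullet> v + norm (z \<bullet> v, sqrt ((1 / \<mu>\<^sup>2 - 1) * (v \<bullet> v)) *\<^sub>R z)"
    using norm_fst_le[of "z \<bullet> v" "sqrt ((1 / \<mu>\<^sup>2 - 1) * (v \<bullet> v)) *\<^sub>R z"] by simp
  then show ?thesis
    by (simp add: apollonius_scale_eq_norm[OF assms])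
qed

lemma apollonius_scale_le_1_imp_norm_le:
  fixes v z :: "'a::real_inner"
  assumes "0 < \<mu>" "\<mu> \<le> 1" "v \<noteq> 0" and "apollonius_scale \<mu> v z \<le> 1"
  shows "norm z \<le> \<mu> * norm (z - v)"
proof -
  define K where "K = 1 / \<mu>\<^sup>2 - 1"
  define d where "d = z \<bullet> v"
  define r where "r = v \<bullet> v"
  define S where "S = sqrt (d\<^sup>2 + K * r * (z \<bullet> z))"
  have K: "0 \<le> K" using inverse_square_minus_one_nonneg[OF assms(1,2)] by (simp add: K_def)
  have r: "0 < r" using assms(3) by (simp add: r_def)
  have radicand: "0 \<le> d\<^sup>2 + K * r * (z \<bullet> z)"
    using K r by simp
  have S2: "S\<^sup>2 = d\<^sup>2 + K * r * (z \<bullet> z)"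
    unfolding S_def using radicand by simp
  have "d + S \<le> r"
    using assms(4) r by (simp add: apollonius_scale_def K_def d_def r_def S_def pos_divide_le_eq)
  then have "S\<^sup>2 \<le> (r - d)\<^sup>2"
    using radicand by (intro power_mono) (auto simp: S_def)
  then have "r * (K * (z \<bullet> z)) \<le> r * (r - 2 * d)"
    unfolding S2 by (simp add: power2_eq_square algebra_simps)
  then have "K * (z \<bullet> z) \<le> r - 2 * d"
    using r by simp
  then have "(z \<bullet> z) / \<mu>\<^sup>2 \<le> (norm (z - v))\<^sup>2"
    by (simp add: K_def d_def r_def power2_norm_eq_inner inner_diff_left inner_diff_right
        inner_commute algebra_simps)
  then have "(norm z)\<^sup>2 \<le> (\<mu> * norm (z - v))\<^sup>2"
    using assms(1) by (simp add: power2_norm_eq_inner power_mult_distrib pos_divide_le_eq mult.commute)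
  then show ?thesis
    using assms(1) by simp
qed

(* The triangle inequality for the norm appearing in apollonius_scale_eq_norm. *)
lemma apollonius_scale_diff_bound:
  fixes v x y :: "'a::real_inner"
  assumes "0 < \<mu>" "\<mu> \<le> 1" "v \<noteq> 0"
  shows "((v \<bullet> v) * (apollonius_scale \<mu> v y - apollonius_scale \<mu> v x) + (x - y) \<bullet> v)\<^sup>2
           \<le> ((x - y) \<bullet> v)\<^sup>2 + (1 / \<mu>\<^sup>2 - 1) * (v \<bullet> v) * (norm (x - y))\<^sup>2"
proof -
  define K where "K = 1 / \<mu>\<^sup>2 - 1"
  define L where "L z = (z \<bullet> v, sqrt (K * (v \<bullet> v)) *\<^sub>R z)" for z
  have K: "0 \<le> K" using inverse_square_minus_one_nonneg[OF assms(1,2)] by (simp add: K_def)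
  have scale: "apollonius_scale \<mu> v z = (z \<bullet> v + norm (L z)) / (v \<bullet> v)" for z
    using apollonius_scale_eq_norm[OF assms(1,2)] by (simp add: K_def L_def)
  have "(v \<bullet> v) * (apollonius_scale \<mu> v y - apollonius_scale \<mu> v x) + (x - y) \<bullet> v
          = norm (L y) - norm (L x)"
    using assms(3) by (simp add: scale inner_diff_left field_simps)
  moreover have "\<bar>norm (L y) - norm (L x)\<bar> \<le> norm (L (x - y))"
  proof -
    have "L x - L y = L (x - y)" by (simp add: L_def inner_diff_left scaleR_diff_right)
    then show ?thesis using norm_triangle_ineq3[of "L x" "L y"] by (simp add: abs_minus_commute)
  qed
  moreover have "(norm (L (x - y)))\<^sup>2 = ((x - y) \<bullet> v)\<^sup>2 + K * (v \<bullet> v) * (norm (x - y))\<^sup>2"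
    using K by (simp add: L_def norm_Pair power_mult_distrib)
  ultimately show ?thesis
    unfolding K_def by (metis abs_le_square_iff abs_norm_cancel)
qed

lemma lipschitz_apollonius_shift:
  fixes v :: "'a::real_inner"
  assumes "0 < \<mu>" "\<mu> \<le> 1" "v \<noteq> 0"
  shows "(1 / \<mu>)-lipschitz_on UNIV (\<lambda>z. z - apollonius_scale \<mu> v z *\<^sub>R v)"
proof (rule lipschitz_onI)
  fix x y :: 'a
  define r where "r = v \<bullet> v"
  define d where "d = (x - y) \<bullet> v"
  define \<sigma> where "\<sigma> = apollonius_scale \<mu> v y - apollonius_scale \<mu> v x"
  have r: "0 < r" using assms(3) by (simp add: r_def)
  have shift: "(x - apollonius_scale \<mu> v x *\<^sub>R v) - (y - apollonius_scale \<mu> v y *\<^sub>R v)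
                 = (x - y) + \<sigma> *\<^sub>R v"
    by (simp add: \<sigma>_def algebra_simps)
  have "(norm ((x - y) + \<sigma> *\<^sub>R v))\<^sup>2 = (norm (x - y))\<^sup>2 + 2 * \<sigma> * d + \<sigma>\<^sup>2 * r"
    unfolding power2_norm_eq_inner d_def r_def
    by (simp add: inner_add_left inner_add_right inner_commute power2_eq_square algebra_simps)
  then have "r * (norm ((x - y) + \<sigma> *\<^sub>R v))\<^sup>2 = r * (norm (x - y))\<^sup>2 + ((r * \<sigma> + d)\<^sup>2 - d\<^sup>2)"
    by (simp add: power2_eq_square algebra_simps)
  also have "\<dots> \<le> r * ((norm (x - y))\<^sup>2 / \<mu>\<^sup>2)"
    using apollonius_scale_diff_bound[OF assms, where x = x and y = y] assms(1)
    by (simp add: r_def d_def \<sigma>_def algebra_simps)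
  also have "\<dots> = r * (1 / \<mu> * dist x y)\<^sup>2"
    by (simp add: dist_norm power_divide)
  finally have "(norm ((x - y) + \<sigma> *\<^sub>R v))\<^sup>2 \<le> (1 / \<mu> * dist x y)\<^sup>2"
    using mult_le_cancel_left_pos[OF r] by blast
  then show "dist (x - apollonius_scale \<mu> v x *\<^sub>R v) (y - apollonius_scale \<mu> v y *\<^sub>R v)
               \<le> 1 / \<mu> * dist x y"
    unfolding dist_norm[of "x - _"] shift using assms(1)
    by (metis power2_le_imp_le divide_nonneg_pos norm_ge_zero zero_le_one mult_nonneg_nonneg dist_norm)
qed (use assms(1) in simp)

lemma scaled_max_zero_diff:
  fixes l p q :: real
  assumes "0 \<le> l" "l \<le> 1"
  obtains \<theta> where "0 \<le> \<theta>" "\<theta> \<le> 1" "l * (max 0 p - max 0 q) = \<theta> * (p - q)"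
proof -
  have "\<exists>\<theta>\<^sub>0\<in>{0..1}. max 0 p - max 0 q = \<theta>\<^sub>0 * (p - q)"
  proof -
    consider "p \<le> 0" "q \<le> 0" | "0 \<le> p" "0 \<le> q" | "0 < p" "q < 0" | "p < 0" "0 < q"
      by linarith
    then show ?thesis
    proof cases
      case 3
      then show ?thesis by (intro bexI[of _ "p / (p - q)"]) (auto simp: field_simps)
    next
      case 4
      then show ?thesis by (intro bexI[of _ "q / (q - p)"]) (auto simp: field_simps)
    qed (force, force)
  qed
  then obtain \<theta>\<^sub>0 where "0 \<le> \<theta>\<^sub>0" "\<theta>\<^sub>0 \<le> 1" "max 0 p - max 0 q = \<theta>\<^sub>0 * (p - q)"
    by auto
  then show ?thesis
    using assms by (intro that[of "l * \<theta>\<^sub>0"]) (auto simp: mult_le_one)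
qed

(* A difference of offsets is a convex combination of the difference of the points and the
   difference of their shifts z - apollonius_scale \<mu> v z *\<^sub>R v. *)
lemma lipschitz_apollonius_pursuit_offset:
  fixes v :: "'a::real_inner"
  assumes "0 < \<mu>" "\<mu> \<le> 1" "v \<noteq> 0" and "0 \<le> l" "l \<le> 1"
  shows "(1 / \<mu>)-lipschitz_on UNIV (\<lambda>z. z + (l * max 0 (1 - apollonius_scale \<mu> v z)) *\<^sub>R v)"
proof (rule lipschitz_onI)
  fix x y :: 'a
  define u where "u = apollonius_scale \<mu> v"
  define shift where "shift z = z - u z *\<^sub>R v" for z
  obtain \<theta> where \<theta>: "0 \<le> \<theta>" "\<theta> \<le> 1"
    and eq: "l * (max 0 (1 - u x) - max 0 (1 - u y)) = \<theta> * (u y - u x)"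
    using scaled_max_zero_diff[OF assms(4,5), of "1 - u x" "1 - u y"] by auto
  have "(x + (l * max 0 (1 - u x)) *\<^sub>R v) - (y + (l * max 0 (1 - u y)) *\<^sub>R v)
          = (x - y) + (l * (max 0 (1 - u x) - max 0 (1 - u y))) *\<^sub>R v"
    by (simp add: algebra_simps)
  also have "\<dots> = (1 - \<theta>) *\<^sub>R (x - y) + \<theta> *\<^sub>R (shift x - shift y)"
    unfolding eq shift_def by (simp add: algebra_simps)
  finally have "dist (x + (l * max 0 (1 - u x)) *\<^sub>R v) (y + (l * max 0 (1 - u y)) *\<^sub>R v)
                  = norm ((1 - \<theta>) *\<^sub>R (x - y) + \<theta> *\<^sub>R (shift x - shift y))"
    by (simp add: dist_norm)
  also have "\<dots> \<le> (1 - \<theta>) * dist x y + \<theta> * dist (shift x) (shift y)"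
    using norm_triangle_ineq[of "(1 - \<theta>) *\<^sub>R (x - y)" "\<theta> *\<^sub>R (shift x - shift y)"] \<theta>
    by (simp add: dist_norm)
  also have "\<dots> \<le> (1 - \<theta>) * (1 / \<mu> * dist x y) + \<theta> * (1 / \<mu> * dist x y)"
  proof (intro add_mono mult_left_mono)
    show "dist x y \<le> 1 / \<mu> * dist x y"
      using assms(1,2) mult_left_le_one_le[of "dist x y" \<mu>] by (simp add: field_simps)
    show "dist (shift x) (shift y) \<le> 1 / \<mu> * dist x y"
      using lipschitz_onD[OF lipschitz_apollonius_shift[OF assms(1-3)]]
      by (simp add: shift_def u_def)
  qed (use \<theta> in auto)
  also have "\<dots> = 1 / \<mu> * dist x y"
    using assms(1) by (simp add: field_simps)
  finally show "dist (x + (l * max 0 (1 - u x)) *\<^sub>R v) (y + (l * max 0 (1 - u y)) *\<^sub>R v)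
                  \<le> 1 / \<mu> * dist x y" .
qed (use assms(1) in simp)

lemma lipschitz_on_ramp:
  fixes c :: real
  assumes "0 \<le> c"
  shows "c-lipschitz_on S (\<lambda>t. max 0 (1 - c * (t - t0)))"
proof (rule lipschitz_onI)
  fix t s :: real
  have "\<bar>max 0 (1 - c * (t - t0)) - max 0 (1 - c * (s - t0))\<bar> \<le>
          \<bar>(1 - c * (t - t0)) - (1 - c * (s - t0))\<bar>"
    by linarith
  also have "\<dots> = c * dist t s"
    using assms by (simp add: dist_real_def abs_mult abs_minus_commute right_diff_distrib[symmetric])
  finally show "dist (max 0 (1 - c * (t - t0))) (max 0 (1 - c * (s - t0))) \<le> c * dist t s"
    by (simp add: dist_real_def)
qed (fact assms)

lemma first_time_nonpos:
  fixes g :: "real \<Rightarrow> real"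
  assumes "a \<le> b" "continuous_on {a..b} g" "0 \<le> g a"
  obtains c where "a \<le> c" "c \<le> b" "c = b \<or> g c \<le> 0" "\<forall>s\<in>{a..c}. 0 \<le> g s"
proof (cases "\<forall>t\<in>{a..b}. 0 < g t")
  case True
  then show ?thesis using assms(1) by (intro that[of b]) auto
next
  case False
  then obtain t where t: "a \<le> t" "t \<le> b" "g t \<le> 0" by force
  have zero_before: "\<exists>x\<in>{a..s}. g x = 0" if "a \<le> s" "s \<le> b" "g s \<le> 0" for s
    using IVT2'[of g s 0 a] assms(2,3) that continuous_on_subset[OF assms(2), of "{a..s}"] by auto
  define Z where "Z = {x \<in> {a..b}. g x = 0}"
  have "compact Z"
    unfolding compact_eq_bounded_closed Z_def using continuous_closed_preimage_constant[OF assms(2)]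
    by (auto intro: bounded_subset[OF bounded_closed_interval])
  moreover have "Z \<noteq> {}" using zero_before[OF t] t unfolding Z_def by fastforce
  ultimately obtain c where c: "c \<in> Z" "\<forall>x\<in>Z. c \<le> x"
    using compact_attains_inf by blast
  have "0 \<le> g s" if s: "s \<in> {a..c}" for s
  proof (rule ccontr)
    assume "\<not> 0 \<le> g s"
    then obtain x where "x \<in> {a..s}" "g x = 0" using zero_before[of s] s c(1) by (auto simp: Z_def)
    then have "c \<le> x" "x \<le> s" using c(2) s c(1) by (auto simp: Z_def)
    then have "s = c" using s by auto
    then show False using c(1) \<open>\<not> 0 \<le> g s\<close> by (simp add: Z_def)
  qed
  then show ?thesis using c(1) by (intro that[of c]) (auto simp: Z_def)
qed

definition apollonius_pursuit ::
  "real \<Rightarrow> real \<Rightarrow> real \<Rightarrow> 'a::real_inner \<Rightarrow> 'a \<Rightarrow> (real \<Rightarrow> 'a) \<Rightarrow> real \<Rightarrow> 'a" where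
  "apollonius_pursuit \<mu> c t0 xE0 xP0 e t =
     e t + (max 0 (1 - c * (t - t0)) * max 0 (1 - apollonius_scale \<mu> (xP0 - xE0) (e t - xE0)))
             *\<^sub>R (xP0 - xE0)"

lemma lipschitz_apollonius_pursuit:
  fixes e :: "real \<Rightarrow> 'a::real_inner"
  assumes "0 < \<mu>" "\<mu> \<le> 1" "xE0 \<noteq> xP0" "0 \<le> c" "c * dist xE0 xP0 \<le> 1 - \<nu> / \<mu>"
    and "\<nu>-lipschitz_on {t0..} e"
  shows "1-lipschitz_on {t0..} (apollonius_pursuit \<mu> c t0 xE0 xP0 e)"
proof (rule lipschitz_onI)
  fix t s assume ts: "t \<in> {t0..}" "s \<in> {t0..}"
  define v where "v = xP0 - xE0"
  define lam where "lam t = max 0 (1 - c * (t - t0))" for t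
  define m where "m z = max 0 (1 - apollonius_scale \<mu> v z)" for z
  define offset where "offset l z = z + (l * m z) *\<^sub>R v" for l z
  define zt where "zt = e t - xE0"
  define zs where "zs = e s - xE0"
  have v: "v \<noteq> 0" using assms(3) by (simp add: v_def)
  have m: "0 \<le> m zs" "m zs \<le> 1"
    using apollonius_scale_nonneg[OF assms(1,2)] by (auto simp: m_def)
  have "apollonius_pursuit \<mu> c t0 xE0 xP0 e t - apollonius_pursuit \<mu> c t0 xE0 xP0 e s
          = (offset (lam t) zt - offset (lam t) zs) + ((lam t - lam s) * m zs) *\<^sub>R v"
    by (simp add: apollonius_pursuit_def offset_def lam_def m_def v_def zt_def zs_def algebra_simps)
  then have "dist (apollonius_pursuit \<mu> c t0 xE0 xP0 e t) (apollonius_pursuit \<mu> c t0 xE0 xP0 e s)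
               \<le> dist (offset (lam t) zt) (offset (lam t) zs) + \<bar>lam t - lam s\<bar> * m zs * norm v"
    using norm_triangle_ineq[of "offset (lam t) zt - offset (lam t) zs"
                                "((lam t - lam s) * m zs) *\<^sub>R v"] m
    by (simp add: dist_norm abs_mult)
  also have "\<dots> \<le> 1 / \<mu> * dist zt zs + (c * dist t s) * 1 * norm v"
  proof (intro add_mono mult_mono)
    have "0 \<le> lam t" "lam t \<le> 1" using ts assms(4) by (auto simp: lam_def)
    then show "dist (offset (lam t) zt) (offset (lam t) zs) \<le> 1 / \<mu> * dist zt zs"
      using lipschitz_onD[OF lipschitz_apollonius_pursuit_offset[OF assms(1,2) v]]
      by (simp add: offset_def m_def)
    show "\<bar>lam t - lam s\<bar> \<le> c * dist t s"
      using lipschitz_onD[OF lipschitz_on_ramp[OF assms(4), where S = UNIV] UNIV_I UNIV_I]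
      by (simp add: lam_def dist_real_def)
  qed (use m assms(4) in auto)
  also have "\<dots> \<le> \<nu> / \<mu> * dist t s + (1 - \<nu> / \<mu>) * dist t s"
  proof (intro add_mono)
    have "dist zt zs \<le> \<nu> * dist t s"
      using lipschitz_onD[OF assms(6) ts] by (simp add: zt_def zs_def dist_norm)
    then show "1 / \<mu> * dist zt zs \<le> \<nu> / \<mu> * dist t s"
      using assms(1) by (simp add: divide_right_mono)
    have "norm v = dist xE0 xP0" by (simp add: v_def dist_norm norm_minus_commute)
    then show "c * dist t s * 1 * norm v \<le> (1 - \<nu> / \<mu>) * dist t s"
      using mult_right_mono[OF assms(5) zero_le_dist[of t s]] by (simp add: mult_ac)
  qed
  finally show "dist (apollonius_pursuit \<mu> c t0 xE0 xP0 e t) (apollonius_pursuit \<mu> c t0 xE0 xP0 e s)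
                  \<le> 1 * dist t s"
    by (simp add: algebra_simps)
qed simp

lemma apollonius_pursuit_admissible:
  fixes e :: "real \<Rightarrow> pt"
  assumes "0 < \<mu>" "\<mu> \<le> 1" "xE0 \<noteq> xP0" "0 \<le> c" "c * dist xE0 xP0 \<le> 1 - \<nu> / \<mu>"
    and "admissible \<nu> t0 xE0 e"
  shows "admissible 1 t0 xP0 (apollonius_pursuit \<mu> c t0 xE0 xP0 e)"
  using assms lipschitz_apollonius_pursuit[OF assms(1-5)]
  by (simp add: admissible_def apollonius_pursuit_def apollonius_scale_zero)

lemma apollonius_pursuit_captures:
  fixes e :: "real \<Rightarrow> 'a::real_inner"
  assumes "0 < \<mu>" "\<mu> \<le> 1" "xE0 \<noteq> xP0" "0 < c"
    and "continuous_on {t0..} e" "e t0 = xE0"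
  obtains tc where "t0 \<le> tc" "apollonius_pursuit \<mu> c t0 xE0 xP0 e tc = e tc"
    "\<forall>s\<in>{t0..tc}. norm (e s - xE0) \<le> \<mu> * norm (e s - xP0)"
proof -
  define v where "v = xP0 - xE0"
  define g where "g t = 1 - apollonius_scale \<mu> v (e t - xE0)" for t
  have v: "v \<noteq> 0" using assms(3) by (simp add: v_def)
  have "continuous_on {t0..t0 + 1 / c} g"
    unfolding g_def
    by (intro continuous_intros continuous_on_compose2[OF continuous_on_apollonius_scale]
        continuous_on_subset[OF assms(5)]) auto
  moreover have "0 \<le> g t0" by (simp add: g_def assms(6) apollonius_scale_zero)
  ultimately obtain tc where tc: "t0 \<le> tc" "tc \<le> t0 + 1 / c" "tc = t0 + 1 / c \<or> g tc \<le> 0"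
    and g_nonneg: "\<forall>s\<in>{t0..tc}. 0 \<le> g s"
    using first_time_nonpos[of t0 "t0 + 1 / c" g] assms(4) by auto
  have "apollonius_pursuit \<mu> c t0 xE0 xP0 e tc = e tc"
    using tc(3) assms(4) by (auto simp: apollonius_pursuit_def g_def v_def)
  moreover have "norm (e s - xE0) \<le> \<mu> * norm (e s - xP0)" if "s \<in> {t0..tc}" for s
    using apollonius_scale_le_1_imp_norm_le[OF assms(1,2) v, of "e s - xE0"] g_nonneg that
    by (simp add: g_def v_def)
  ultimately show ?thesis using that tc(1) by blast
qed

definition pursuer_can_win :: "pt set \<Rightarrow> real \<Rightarrow> real \<Rightarrow> pt \<Rightarrow> pt \<Rightarrow> bool" where
  "pursuer_can_win T \<nu> t0 xE0 xP0 \<longleftrightarrow>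
     (\<exists>\<beta>. pursuer_strategy \<nu> t0 xE0 xP0 \<beta> \<and>
          (\<forall>e. admissible \<nu> t0 xE0 e \<longrightarrow> pursuer_wins_play T t0 e (\<beta> e)))"

lemma pursuer_strategy_apollonius_pursuit:
  assumes "0 < \<mu>" "\<mu> \<le> 1" "xE0 \<noteq> xP0" "0 \<le> c" "c * dist xE0 xP0 \<le> 1 - \<nu> / \<mu>"
  shows "pursuer_strategy \<nu> t0 xE0 xP0 (apollonius_pursuit \<mu> c t0 xE0 xP0)"
  unfolding pursuer_strategy_def
  using apollonius_pursuit_admissible[OF assms] by (simp add: apollonius_pursuit_def)

lemma pursuer_can_win_if_apollonius_disjoint:
  assumes "xE0 \<noteq> xP0" "0 \<le> \<nu>" "\<nu> < \<mu>" "\<mu> \<le> 1"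
    and "\<And>x. norm (x - xE0) \<le> \<mu> * norm (x - xP0) \<Longrightarrow> x \<notin> T"
  shows "pursuer_can_win T \<nu> t0 xE0 xP0"
proof -
  define c where "c = (1 - \<nu> / \<mu>) / dist xE0 xP0"
  have \<mu>: "0 < \<mu>" using assms(2,3) by simp
  have c: "0 < c" "c * dist xE0 xP0 \<le> 1 - \<nu> / \<mu>"
    using assms(1,3) \<mu> by (simp_all add: c_def)
  have "pursuer_wins_play T t0 e (apollonius_pursuit \<mu> c t0 xE0 xP0 e)"
    if "admissible \<nu> t0 xE0 e" for e
  proof -
    have "continuous_on {t0..} e" "e t0 = xE0"
      using that lipschitz_on_continuous_on by (auto simp: admissible_def)
    then obtain tc where "t0 \<le> tc" "apollonius_pursuit \<mu> c t0 xE0 xP0 e tc = e tc"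
      "\<forall>s\<in>{t0..tc}. norm (e s - xE0) \<le> \<mu> * norm (e s - xP0)"
      using apollonius_pursuit_captures[OF \<mu> assms(4,1) c(1)] by metis
    then show ?thesis unfolding pursuer_wins_play_def using assms(5) by metis
  qed
  then show ?thesis
    unfolding pursuer_can_win_def
    using pursuer_strategy_apollonius_pursuit[OF \<mu> assms(4,1) less_imp_le[OF c(1)] c(2)] by blast
qed

lemma admissible_straight_run:
  fixes x0 w :: pt
  assumes "0 \<le> \<kappa>" "\<kappa> \<le> \<nu>" "x0 \<noteq> w"
  shows "admissible \<nu> t0 x0 (\<lambda>t. x0 + min 1 (\<kappa> * (t - t0) / norm (w - x0)) *\<^sub>R (w - x0))"
proof -
  define l where "l = norm (w - x0)"
  define e where "e t = x0 + min 1 (\<kappa> * (t - t0) / l) *\<^sub>R (w - x0)" for t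
  have l: "0 < l" using assms(3) by (simp add: l_def)
  have "\<kappa>-lipschitz_on {t0..} e"
  proof (rule lipschitz_onI)
    fix t s :: real
    have "dist (e t) (e s) = \<bar>min 1 (\<kappa> * (t - t0) / l) - min 1 (\<kappa> * (s - t0) / l)\<bar> * l"
      by (simp add: e_def dist_norm l_def flip: scaleR_diff_left)
    also have "\<dots> \<le> \<bar>\<kappa> * (t - t0) / l - \<kappa> * (s - t0) / l\<bar> * l"
      using l by (intro mult_right_mono) linarith+
    also have "\<dots> = \<kappa> * dist t s"
      using l assms(1)
      by (simp add: dist_real_def abs_mult flip: diff_divide_distrib right_diff_distrib)
    finally show "dist (e t) (e s) \<le> \<kappa> * dist t s" .
  qed (fact assms(1))
  then show ?thesis
    using assms(2) unfolding admissible_def e_def[abs_def] l_def by (simp add: lipschitz_on_le)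
qed

lemma apollonius_open_segment:
  assumes "\<kappa> < 1" "w \<noteq> x0" "norm (w - x0) \<le> \<kappa> * norm (w - xP)"
    and "0 \<le> \<theta>" "\<theta> < 1"
  shows "\<theta> * norm (w - x0) < \<kappa> * norm (x0 + \<theta> *\<^sub>R (w - x0) - xP)"
proof -
  define l where "l = norm (w - x0)"
  define y where "y = x0 + \<theta> *\<^sub>R (w - x0)"
  have l: "0 < l" using assms(2) by (simp add: l_def)
  then have "0 < \<kappa> * norm (w - xP)" using assms(3) unfolding l_def by linarith
  then have \<kappa>: "0 < \<kappa>" by (simp add: zero_less_mult_iff)
  have "w - y = (1 - \<theta>) *\<^sub>R (w - x0)" by (simp add: y_def algebra_simps)
  then have "norm (w - y) = (1 - \<theta>) * l" using assms(5) by (simp add: l_def)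
  then have "norm (w - xP) \<le> (1 - \<theta>) * l + norm (y - xP)"
    using norm_triangle_ineq[of "w - y" "y - xP"] by simp
  then have "l \<le> \<kappa> * ((1 - \<theta>) * l + norm (y - xP))"
    using assms(3) mult_left_mono[OF _ less_imp_le[OF \<kappa>]] unfolding l_def by fastforce
  moreover have "0 < (1 - \<kappa>) * (1 - \<theta>) * l" using assms(1,5) l by simp
  ultimately show ?thesis by (simp add: y_def l_def algebra_simps)
qed

lemma not_pursuer_can_win_if_target_reachable:
  assumes "xE0 \<notin> T" "w \<in> T" "\<kappa> < 1" "\<kappa> \<le> \<nu>"
    and "norm (w - xE0) \<le> \<kappa> * norm (w - xP0)"
  shows "\<not> pursuer_can_win T \<nu> t0 xE0 xP0"
proof
  assume "pursuer_can_win T \<nu> t0 xE0 xP0"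
  then obtain \<beta> where strategy: "pursuer_strategy \<nu> t0 xE0 xP0 \<beta>"
    and wins: "\<forall>e. admissible \<nu> t0 xE0 e \<longrightarrow> pursuer_wins_play T t0 e (\<beta> e)"
    unfolding pursuer_can_win_def by blast
  define l where "l = norm (w - xE0)"
  define \<theta> where "\<theta> t = min 1 (\<kappa> * (t - t0) / l)" for t
  define e where "e t = xE0 + \<theta> t *\<^sub>R (w - xE0)" for t
  have "w \<noteq> xE0" using assms(1,2) by auto
  then have l: "0 < l" by (simp add: l_def)
  then have "0 < \<kappa> * norm (w - xP0)" using assms(5) unfolding l_def by linarith
  then have \<kappa>: "0 < \<kappa>" by (simp add: zero_less_mult_iff)
  have e: "admissible \<nu> t0 xE0 e"
    unfolding e_def[abs_def] \<theta>_def l_def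
    using admissible_straight_run[OF less_imp_le[OF \<kappa>] assms(4) \<open>w \<noteq> xE0\<close>[symmetric]] .
  then have \<beta>e: "admissible 1 t0 xP0 (\<beta> e)"
    using strategy by (simp add: pursuer_strategy_def)
  obtain tc where tc: "t0 \<le> tc" "\<beta> e tc = e tc" and "e tc \<notin> T"
    using wins e by (auto simp: pursuer_wins_play_def)
  then have "\<theta> tc \<noteq> 1" using assms(2) by (auto simp: e_def)
  then have \<theta>: "\<theta> tc = \<kappa> * (tc - t0) / l" "0 \<le> \<theta> tc" "\<theta> tc < 1"
    using tc(1) \<kappa> l by (auto simp: \<theta>_def min_def)
  have "dist (\<beta> e tc) (\<beta> e t0) \<le> 1 * dist tc t0"
    using \<beta>e tc(1) by (intro lipschitz_onD) (auto simp: admissible_def)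
  then have "norm (e tc - xP0) \<le> tc - t0"
    using \<beta>e tc by (simp add: admissible_def dist_norm)
  then have "\<kappa> * norm (e tc - xP0) \<le> \<theta> tc * l"
    using \<theta>(1) \<kappa> l by (simp add: mult_left_mono)
  moreover have "\<theta> tc * l < \<kappa> * norm (e tc - xP0)"
    using apollonius_open_segment[OF assms(3) \<open>w \<noteq> xE0\<close> assms(5) \<theta>(2,3)]
    by (simp add: e_def l_def)
  ultimately show False by simp
qed

theorem mainTheorem10:
  fixes T :: "pt set" and xE0 xP0 :: pt and t0 \<nu>true \<nu>crit :: real
  assumes "closed T" and "T \<noteq> {}"
    and "xE0 \<noteq> xP0" and "xE0 \<notin> T"
    and "\<nu>crit \<in> crit_set T xE0 xP0" and "\<forall>\<nu>\<in>crit_set T xE0 xP0. \<nu>crit \<le> \<nu>"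
    and "0 \<le> \<nu>true"
  shows "(\<exists>\<beta>. pursuer_strategy \<nu>true t0 xE0 xP0 \<beta> \<and>
            (\<forall>e. admissible \<nu>true t0 xE0 e \<longrightarrow> pursuer_wins_play T t0 e (\<beta> e)))
         \<longleftrightarrow> \<nu>true < \<nu>crit"
proof -
  obtain w where crit: "\<nu>crit < 1" "w \<in> T" "norm (w - xE0) \<le> \<nu>crit * norm (w - xP0)"
    using assms(5) mem_crit_set_iff[OF assms(1,2)] by auto
  have "pursuer_can_win T \<nu>true t0 xE0 xP0 \<longleftrightarrow> \<nu>true < \<nu>crit"
  proof
    assume "pursuer_can_win T \<nu>true t0 xE0 xP0"
    then show "\<nu>true < \<nu>crit"
      using not_pursuer_can_win_if_target_reachable[OF assms(4) crit(2,1) _ crit(3)] by (meson not_less)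
  next
    assume "\<nu>true < \<nu>crit"
    define \<mu> where "\<mu> = (\<nu>true + \<nu>crit) / 2"
    have \<mu>: "\<nu>true < \<mu>" "\<mu> < \<nu>crit"
      using \<open>\<nu>true < \<nu>crit\<close> by (simp_all add: \<mu>_def)
    have "x \<notin> T" if "norm (x - xE0) \<le> \<mu> * norm (x - xP0)" for x
    proof
      assume "x \<in> T"
      then have "\<mu> \<in> crit_set T xE0 xP0"
        using that \<mu> assms(7) crit(1) mem_crit_set_iff[OF assms(1,2)] by auto
      then show False using assms(6) \<mu>(2) by fastforce
    qed
    then show "pursuer_can_win T \<nu>true t0 xE0 xP0"
      using pursuer_can_win_if_apollonius_disjoint[OF assms(3,7) \<mu>(1)] \<mu>(2) crit(1) by auto
  qed
  then show ?thesis by (simp add: pursuer_can_win_def)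
qed

end
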